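(* Let $\mathbf A$ be a finite simple algebra of type 2 (affine type) whose traces have cardinality a power of the prime $p$. Then there is an integer $k$ depending only on $\mathbf A$ such that for every program $(t,\iota,S)$ over $\mathbf A$ of length $l$, there is a $\mathrm{BOUND}_k\circ\mathrm{MOD}_p$ circuit of size $O(l)$ computing the same Boolean function as $(t,\iota,S)$.
   Context: A finite algebra has finite universe and finitely many basic operations; it is simple if its only congruences are the trivial ones; its type is the tame congruence theory type of its unique prime quotient $0\prec 1$. An $n$-ary circuit over $\mathbf A$ is a DAG with one output node, sources labelled by variables $x_1,\dots,x_n$ or constants, gates labelled by basic operations; its size (length) is nodes plus edges. A program $(t,\iota,S)$ over $\mathbf A$ consists of an $n$-ary circuit $t$, $\iota:\{0,1\}\to A$ and $S\subseteq A$; it computes $b\mapsto 1$ iff $t(\iota(b_1),\dots,\iota(b_n))\in S$; its length is the size of $t$. A $\mathrm{MOD}_p$ gate with accepting set $T\subseteq\mathbb Z_p$ has unbounded fan-in and outputs 1 iff the sum of its Boolean inputs modulo $p$ is in $T$. A $\mathrm{BOUND}_k$ gate has at most $k$ inputs and computes an arbitrary Boolean function of them. A $\mathrm{BOUND}_k\circ\mathrm{MOD}_p$ circuit is a single $\mathrm{BOUND}_k$ gate whose inputs are $\mathrm{MOD}_p$ gates reading the input bits; its size is the number of edges plus gates. *)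

theory Defs
  imports "HOL-Computational_Algebra.Primes" "HOL-Algebra.Ring"
begin

text \<open>A finite algebra is represented by a finite type 'a (its universe is UNIV)
  together with a finite list F of basic operations, each given as a pair
  (arity, operation on argument lists).\<close>

type_synonym 'a ops = "(nat \<times> ('a list \<Rightarrow> 'a)) list"

definition congruence :: "'a ops \<Rightarrow> ('a \<times> 'a) set \<Rightarrow> bool" where
  "congruence F \<theta> \<longleftrightarrow> equiv UNIV \<theta> \<and>
     (\<forall>(n, f) \<in> set F. \<forall>xs ys. length xs = n \<and> length ys = n \<and>
        list_all2 (\<lambda>x y. (x, y) \<in> \<theta>) xs ys \<longrightarrow> (f xs, f ys) \<in> \<theta>)"

definition simple_alg :: "('a::finite) ops \<Rightarrow> bool" where
  "simple_alg F \<longleftrightarrow> card (UNIV :: 'a set) \<ge> 2 \<and>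
     (\<forall>\<theta>. congruence F \<theta> \<longrightarrow> \<theta> = Id \<or> \<theta> = UNIV)"

datatype 'a pterm = PVar nat | PConst 'a | PApp nat "'a pterm list"

fun wf_pterm :: "'a ops \<Rightarrow> nat \<Rightarrow> 'a pterm \<Rightarrow> bool" where
  "wf_pterm F n (PVar i) = (i < n)"
| "wf_pterm F n (PConst c) = True"
| "wf_pterm F n (PApp j ts) =
     (j < length F \<and> length ts = fst (F ! j) \<and> (\<forall>t\<in>set ts. wf_pterm F n t))"

fun peval :: "'a ops \<Rightarrow> (nat \<Rightarrow> 'a) \<Rightarrow> 'a pterm \<Rightarrow> 'a" where
  "peval F e (PVar i) = e i"
| "peval F e (PConst c) = c"
| "peval F e (PApp j ts) = snd (F ! j) (map (peval F e) ts)"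

definition is_pol :: "'a ops \<Rightarrow> nat \<Rightarrow> ('a list \<Rightarrow> 'a) \<Rightarrow> bool" where
  "is_pol F n f \<longleftrightarrow> (\<exists>t. wf_pterm F n t \<and>
     (\<forall>xs. length xs = n \<longrightarrow> f xs = peval F (\<lambda>i. xs ! i) t))"

definition is_upol :: "'a ops \<Rightarrow> ('a \<Rightarrow> 'a) \<Rightarrow> bool" where
  "is_upol F f \<longleftrightarrow> (\<exists>t. wf_pterm F 1 t \<and> (\<forall>a. f a = peval F (\<lambda>_. a) t))"

text \<open>(0,1)-minimal sets: minimal sets f(A), f a unary polynomial with f(1) not in 0,
  i.e. f not constant.\<close>
definition min_set :: "('a::finite) ops \<Rightarrow> 'a set \<Rightarrow> bool" where
  "min_set F U \<longleftrightarrow>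
     (\<exists>f. is_upol F f \<and> (\<exists>a b. f a \<noteq> f b) \<and> U = range f) \<and>
     (\<forall>g. is_upol F g \<and> (\<exists>a b. g a \<noteq> g b) \<and> range g \<subseteq> U \<longrightarrow> range g = U)"

text \<open>(0,1)-traces: sets U \<inter> B with U a (0,1)-minimal set and B a block of the
  congruence 1 such that U \<inter> B is not contained in a block of 0.\<close>
definition is_trace :: "('a::finite) ops \<Rightarrow> 'a set \<Rightarrow> bool" where
  "is_trace F N \<longleftrightarrow> (\<exists>U B. min_set F U \<and> B \<in> UNIV // (UNIV :: ('a \<times> 'a) set) \<and>
     N = U \<inter> B \<and> \<not> (N \<times> N \<subseteq> Id))"

text \<open>The induced algebra on N (all polynomial operations of A under which N is closed,
  restricted to N) is polynomially equivalent to a one-dimensional vector space over a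
  (finite) field with universe N: its n-ary polynomial operations are exactly the
  affine maps c + \<Sum> lam_i x_i.\<close>
definition induced_vector_space :: "'a ops \<Rightarrow> 'a set \<Rightarrow> bool" where
  "induced_vector_space F N \<longleftrightarrow> (\<exists>R :: 'a ring. field R \<and> carrier R = N \<and>
     (\<forall>n (g :: 'a list \<Rightarrow> 'a).
        (\<exists>f. is_pol F n f \<and> (\<forall>xs. length xs = n \<and> set xs \<subseteq> N \<longrightarrow> f xs \<in> N) \<and>
             (\<forall>xs. length xs = n \<and> set xs \<subseteq> N \<longrightarrow> g xs = f xs))
        \<longleftrightarrow>
        (\<exists>c \<in> N. \<exists>lam. (\<forall>i<n. lam i \<in> N) \<and>
             (\<forall>xs. length xs = n \<and> set xs \<subseteq> N \<longrightarrow>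
                g xs = c \<oplus>\<^bsub>R\<^esub> (\<Oplus>\<^bsub>R\<^esub>i\<in>{..<n}. lam i \<otimes>\<^bsub>R\<^esub> xs ! i)))))"

definition tct_type2 :: "('a::finite) ops \<Rightarrow> bool" where
  "tct_type2 F \<longleftrightarrow> (\<forall>N. is_trace F N \<longrightarrow> induced_vector_space F N)"

datatype 'a gate = GIn nat | GConst 'a | GOp nat "nat list"

text \<open>A circuit is a topologically sorted list of nodes; arguments refer to earlier
  nodes; the output is the last node.\<close>
definition wf_circuit :: "'a ops \<Rightarrow> nat \<Rightarrow> 'a gate list \<Rightarrow> bool" where
  "wf_circuit F n gs \<longleftrightarrow> gs \<noteq> [] \<and> (\<forall>k < length gs. case gs ! k of
       GIn i \<Rightarrow> i < n
     | GConst c \<Rightarrow> True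
     | GOp j args \<Rightarrow> j < length F \<and> length args = fst (F ! j) \<and> (\<forall>a\<in>set args. a < k))"

fun gate_val :: "'a ops \<Rightarrow> (nat \<Rightarrow> 'a) \<Rightarrow> 'a list \<Rightarrow> 'a gate \<Rightarrow> 'a" where
  "gate_val F x vs (GIn i) = x i"
| "gate_val F x vs (GConst c) = c"
| "gate_val F x vs (GOp j args) = snd (F ! j) (map (\<lambda>a. vs ! a) args)"

fun eval_gates :: "'a ops \<Rightarrow> (nat \<Rightarrow> 'a) \<Rightarrow> 'a list \<Rightarrow> 'a gate list \<Rightarrow> 'a list" where
  "eval_gates F x vs [] = vs"
| "eval_gates F x vs (g # gs) = eval_gates F x (vs @ [gate_val F x vs g]) gs"

definition circuit_val :: "'a ops \<Rightarrow> 'a gate list \<Rightarrow> (nat \<Rightarrow> 'a) \<Rightarrow> 'a" where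
  "circuit_val F gs x = last (eval_gates F x [] gs)"

fun gate_indeg :: "'a gate \<Rightarrow> nat" where
  "gate_indeg (GOp j args) = length args"
| "gate_indeg _ = 0"

definition circuit_size :: "'a gate list \<Rightarrow> nat" where
  "circuit_size gs = length gs + sum_list (map gate_indeg gs)"

definition program_val :: "'a ops \<Rightarrow> 'a gate list \<Rightarrow> (bool \<Rightarrow> 'a) \<Rightarrow> 'a set \<Rightarrow> (nat \<Rightarrow> bool) \<Rightarrow> bool" where
  "program_val F gs \<iota> S b \<longleftrightarrow> circuit_val F gs (\<lambda>i. \<iota> (b i)) \<in> S"

text \<open>A MOD_p gate: (set of input bits it reads, accepting set T \<subseteq> Z_p = {0..<p}).
  A BOUND o MOD circuit: list of MOD gates and a Boolean function g of their outputs.\<close>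
definition mod_gate_val :: "nat \<Rightarrow> nat set \<times> nat set \<Rightarrow> (nat \<Rightarrow> bool) \<Rightarrow> bool" where
  "mod_gate_val p G b \<longleftrightarrow> card {i \<in> fst G. b i} mod p \<in> snd G"

definition bm_val :: "nat \<Rightarrow> (nat set \<times> nat set) list \<Rightarrow> (bool list \<Rightarrow> bool) \<Rightarrow> (nat \<Rightarrow> bool) \<Rightarrow> bool" where
  "bm_val p M g b = g (map (\<lambda>G. mod_gate_val p G b) M)"

definition bm_wf :: "nat \<Rightarrow> nat \<Rightarrow> nat \<Rightarrow> (nat set \<times> nat set) list \<Rightarrow> bool" where
  "bm_wf k p n M \<longleftrightarrow> length M \<le> k \<and> (\<forall>G\<in>set M. fst G \<subseteq> {..<n} \<and> snd G \<subseteq> {..<p})"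

text \<open>Size = edges (input wires into MOD gates, MOD gates into the BOUND gate) plus
  gates (the MOD gates and the BOUND gate).\<close>
definition bm_size :: "(nat set \<times> nat set) list \<Rightarrow> nat" where
  "bm_size M = sum_list (map (\<lambda>G. card (fst G)) M) + length M + length M + 1"

end

theory Submission
  imports Defs
begin

text \<open>
  Take a trace N: the range of a nonconstant unary polynomial with smallest possible image.
  Since the algebra has type 2, N carries a field structure of cardinality p^m in which every
  polynomial mapping N into N is affine.  For a polynomial H whose values all lie in N this gives
  the square identity H(x,y) - H(x',y) = H(x,y') - H(x',y') on arguments from N, and
  simplicity, applied to suitable kernels that are closed under unary polynomials, extends it to
  arbitrary arguments.  Consequently such an H is the sum of its one-variable differences, so
  for a program t and a unary polynomial T into N, the value T(t(b)) only depends on the numbers,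
  modulo p, of ones among the inputs i whose unit vector is mapped by t to a given element c.
  As unary polynomials into N separate the points of a simple algebra, the same holds for t(b)
  itself, and a BOUND gate can read these numbers from |A| p MOD_p gates.
\<close>

section \<open>Polynomial terms\<close>

fun psubst :: "(nat \<Rightarrow> 'a pterm) \<Rightarrow> 'a pterm \<Rightarrow> 'a pterm" where
  "psubst s (PVar i) = s i"
| "psubst s (PConst c) = PConst c"
| "psubst s (PApp j ts) = PApp j (map (psubst s) ts)"

lemma peval_psubst: "peval F e (psubst s t) = peval F (\<lambda>i. peval F e (s i)) t"
  by (induction t) (auto cong: map_cong)

lemma wf_pterm_psubst:
  "wf_pterm F n t \<Longrightarrow> (\<And>i. i < n \<Longrightarrow> wf_pterm F m (s i)) \<Longrightarrow> wf_pterm F m (psubst s t)"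
  by (induction t) auto

definition subst_at :: "nat \<Rightarrow> 'a pterm \<Rightarrow> 'a pterm \<Rightarrow> 'a pterm" where
  "subst_at s T H = psubst (\<lambda>k. if k = s then psubst (\<lambda>_. PVar s) T else PVar k) H"

lemma peval_subst_at: "peval F e (subst_at s T H) = peval F (e(s := peval F (\<lambda>_. e s) T)) H"
  unfolding subst_at_def peval_psubst
  by (rule arg_cong[where f = "\<lambda>e. peval F e H"]) (simp add: fun_eq_iff peval_psubst)

lemma wf_pterm_subst_at:
  "wf_pterm F n H \<Longrightarrow> wf_pterm F 1 T \<Longrightarrow> wf_pterm F (max n (Suc s)) (subst_at s T H)"
  unfolding subst_at_def by (rule wf_pterm_psubst) (auto intro: wf_pterm_psubst)

section \<open>Circuits as terms\<close>

definition gate_ok :: "'a ops \<Rightarrow> nat \<Rightarrow> nat \<Rightarrow> 'a gate \<Rightarrow> bool" where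
  "gate_ok F n m g \<longleftrightarrow> (case g of GIn i \<Rightarrow> i < n | GConst c \<Rightarrow> True
     | GOp j args \<Rightarrow> j < length F \<and> length args = fst (F ! j) \<and> (\<forall>a\<in>set args. a < m))"

lemma wf_circuit_iff_gate_ok:
  "wf_circuit F n gs \<longleftrightarrow> gs \<noteq> [] \<and> (\<forall>k<length gs. gate_ok F n k (gs ! k))"
  unfolding wf_circuit_def gate_ok_def ..

fun gate_pterm :: "'a pterm list \<Rightarrow> 'a gate \<Rightarrow> 'a pterm" where
  "gate_pterm ts (GIn i) = PVar i"
| "gate_pterm ts (GConst c) = PConst c"
| "gate_pterm ts (GOp j args) = PApp j (map (\<lambda>a. ts ! a) args)"

fun gates_pterms :: "'a pterm list \<Rightarrow> 'a gate list \<Rightarrow> 'a pterm list" where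
  "gates_pterms ts [] = ts"
| "gates_pterms ts (g # gs) = gates_pterms (ts @ [gate_pterm ts g]) gs"

lemma length_gates_pterms [simp]: "length (gates_pterms ts gs) = length ts + length gs"
  by (induction gs arbitrary: ts) auto

lemma gates_pterms_correct:
  assumes "\<forall>k<length gs. gate_ok F n (length ts + k) (gs ! k)" and "\<forall>t\<in>set ts. wf_pterm F n t"
  shows "eval_gates F x (map (peval F x) ts) gs = map (peval F x) (gates_pterms ts gs) \<and>
    (\<forall>t\<in>set (gates_pterms ts gs). wf_pterm F n t)"
  using assms
proof (induction gs arbitrary: ts)
  case Nil
  then show ?case by simp
next
  case (Cons g gs)
  let ?ts = "ts @ [gate_pterm ts g]"
  have "gate_ok F n (length ts) g" using Cons.prems(1) by fastforce
  then have val: "gate_val F x (map (peval F x) ts) g = peval F x (gate_pterm ts g)"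
    and wf: "wf_pterm F n (gate_pterm ts g)"
    using Cons.prems(2) by (cases g rule: gate.exhaust; fastforce simp: gate_ok_def cong: map_cong)+
  have "\<forall>k<length gs. gate_ok F n (length ?ts + k) (gs ! k)"
    using Cons.prems(1) by fastforce
  moreover have "\<forall>t\<in>set ?ts. wf_pterm F n t" using Cons.prems(2) wf by simp
  ultimately have "eval_gates F x (map (peval F x) ?ts) gs = map (peval F x) (gates_pterms ?ts gs) \<and>
    (\<forall>t\<in>set (gates_pterms ?ts gs). wf_pterm F n t)"
    by (rule Cons.IH)
  then show ?case by (simp add: val)
qed

lemma circuit_val_eq_peval:
  assumes "wf_circuit F n gs"
  obtains t where "wf_pterm F n t" and "circuit_val F gs = (\<lambda>x. peval F x t)"
proof
  have ok: "\<forall>k<length gs. gate_ok F n (length [] + k) (gs ! k)"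
    using assms by (simp add: wf_circuit_iff_gate_ok)
  have ne: "gates_pterms [] gs \<noteq> []"
    using assms by (simp add: wf_circuit_def flip: length_greater_0_conv)
  note correct = gates_pterms_correct[OF ok, of x for x]
  show "wf_pterm F n (last (gates_pterms [] gs))"
    using correct ne by simp
  show "circuit_val F gs = (\<lambda>x. peval F x (last (gates_pterms [] gs)))"
    using correct ne unfolding circuit_val_def by (simp add: fun_eq_iff last_map)
qed

definition circuit_inputs :: "'a gate list \<Rightarrow> nat set" where
  "circuit_inputs gs = {i. GIn i \<in> set gs}"

lemma finite_circuit_inputs: "finite (circuit_inputs gs)"
  and card_circuit_inputs_le: "card (circuit_inputs gs) \<le> length gs"
proof -
  have sub: "GIn ` circuit_inputs gs \<subseteq> set gs" and inj: "inj_on GIn (circuit_inputs gs)"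
    by (auto simp: circuit_inputs_def inj_on_def)
  show "finite (circuit_inputs gs)"
    using finite_imageD[OF finite_subset[OF sub] inj] by simp
  show "card (circuit_inputs gs) \<le> length gs"
    using card_inj_on_le[OF inj sub] card_length[of gs] by simp
qed

lemma circuit_inputs_subset: "wf_circuit F n gs \<Longrightarrow> circuit_inputs gs \<subseteq> {..<n}"
  unfolding wf_circuit_def circuit_inputs_def by (fastforce simp: in_set_conv_nth)

lemma circuit_val_cong:
  assumes "\<And>i. i \<in> circuit_inputs gs \<Longrightarrow> x i = x' i"
  shows "circuit_val F gs x = circuit_val F gs x'"
proof -
  have gate: "gate_val F x vs g = gate_val F x' vs g" if "g \<in> set gs" for vs g
    using that assms by (cases g rule: gate.exhaust) (auto simp: circuit_inputs_def)
  have "eval_gates F x vs gs' = eval_gates F x' vs gs'" if "set gs' \<subseteq> set gs" for vs gs'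
    using that by (induction gs' arbitrary: vs) (auto simp: gate)
  from this[of gs "[]"] show ?thesis unfolding circuit_val_def by simp
qed

lemma circuit_size_bound:
  assumes "wf_circuit F n gs"
  shows "k * (card (circuit_inputs gs) + 2) + 1 \<le> (3 * k + 1) * circuit_size gs"
proof -
  have "card (circuit_inputs gs) \<le> circuit_size gs" "1 \<le> circuit_size gs"
    using card_circuit_inputs_le[of gs] assms by (auto simp: circuit_size_def wf_circuit_def Suc_le_eq)
  then have "k * (card (circuit_inputs gs) + 2) \<le> k * (3 * circuit_size gs)"
    by (intro mult_le_mono2) linarith
  moreover have "(3 * k + 1) * circuit_size gs = k * (3 * circuit_size gs) + circuit_size gs"
    by (simp add: algebra_simps)
  ultimately show ?thesis using \<open>1 \<le> circuit_size gs\<close> by linarith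
qed

section \<open>Simple algebras\<close>

lemma congruence_if_unary_closed:
  assumes equiv: "equiv UNIV \<theta>"
    and closed: "\<And>T x y. wf_pterm F 1 T \<Longrightarrow> (x, y) \<in> \<theta> \<Longrightarrow> (peval F (\<lambda>_. x) T, peval F (\<lambda>_. y) T) \<in> \<theta>"
  shows "congruence F \<theta>"
proof -
  have "(f xs, f ys) \<in> \<theta>"
    if "(n, f) \<in> set F" "list_all2 (\<lambda>x y. (x, y) \<in> \<theta>) xs ys" "length xs = n" for n f xs ys
  proof -
    obtain j where j: "j < length F" "F ! j = (n, f)" using \<open>(n, f) \<in> set F\<close> by (metis in_set_conv_nth)
    have step: "(f (pre @ x # suf), f (pre @ y # suf)) \<in> \<theta>"
      if "length pre + Suc (length suf) = n" "(x, y) \<in> \<theta>" for pre x y suf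
    proof -
      define T where "T = PApp j (map PConst pre @ PVar 0 # map PConst suf)"
      have "wf_pterm F 1 T" using j that(1) by (auto simp: T_def)
      moreover have "peval F (\<lambda>_. z) T = f (pre @ z # suf)" for z
        using j by (simp add: T_def comp_def)
      ultimately show ?thesis using closed that(2) by metis
    qed
    have "(f (pre @ xs), f (pre @ ys)) \<in> \<theta>" if "length pre + length xs = n" for pre
      using \<open>list_all2 _ xs ys\<close> that
    proof (induction xs ys arbitrary: pre rule: list_all2_induct)
      case Nil
      then show ?case using equiv by (simp add: equiv_def refl_on_def)
    next
      case (Cons x xs y ys)
      have "(f (pre @ x # xs), f (pre @ y # xs)) \<in> \<theta>"
        using step Cons by simp
      moreover have "(f ((pre @ [y]) @ xs), f ((pre @ [y]) @ ys)) \<in> \<theta>"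
        using Cons.IH[of "pre @ [y]"] Cons.prems by simp
      ultimately show ?case using equiv by (auto simp: equiv_def elim: transE)
    qed
    from this[of "[]"] show ?thesis using \<open>length xs = n\<close> by simp
  qed
  then show ?thesis unfolding congruence_def using equiv by blast
qed

lemma simple_alg_const_if_kernel_closed:
  assumes "simple_alg F"
    and closed: "\<And>T x y. wf_pterm F 1 T \<Longrightarrow> \<Phi> x = \<Phi> y \<Longrightarrow> \<Phi> (peval F (\<lambda>_. x) T) = \<Phi> (peval F (\<lambda>_. y) T)"
    and "\<Phi> u = \<Phi> v" "u \<noteq> v"
  shows "\<Phi> x = \<Phi> y"
proof -
  let ?\<theta> = "{(x, y). \<Phi> x = \<Phi> y}"
  have "equiv UNIV ?\<theta>" by (auto simp: equiv_def refl_on_def sym_def trans_def)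
  then have "congruence F ?\<theta>" by (rule congruence_if_unary_closed) (use closed in blast)
  moreover have "?\<theta> \<noteq> Id" using assms(3,4) by auto
  ultimately have "?\<theta> = UNIV" using assms(1) unfolding simple_alg_def by blast
  then show ?thesis by auto
qed

text \<open>Otherwise the common kernel of all unary polynomials into U would be a congruence
  strictly between the trivial ones.\<close>

lemma simple_alg_separating_upol:
  assumes "simple_alg F" and T0: "wf_pterm F 1 T0" "\<And>z. peval F (\<lambda>_. z) T0 \<in> U"
    and "peval F (\<lambda>_. a) T0 \<noteq> peval F (\<lambda>_. b) T0" and "x \<noteq> y"
  obtains T where "wf_pterm F 1 T" "\<And>z. peval F (\<lambda>_. z) T \<in> U"
    "peval F (\<lambda>_. x) T \<noteq> peval F (\<lambda>_. y) T"
proof -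
  let ?P = "{T. wf_pterm F 1 T \<and> (\<forall>z. peval F (\<lambda>_. z) T \<in> U)}"
  define \<Phi> where "\<Phi> v = restrict (\<lambda>T. peval F (\<lambda>_. v) T) ?P" for v
  have closed: "\<Phi> (peval F (\<lambda>_. v) T') = \<Phi> (peval F (\<lambda>_. v') T')"
    if "wf_pterm F 1 T'" "\<Phi> v = \<Phi> v'" for T' v v'
  proof
    fix T
    show "\<Phi> (peval F (\<lambda>_. v) T') T = \<Phi> (peval F (\<lambda>_. v') T') T"
    proof (cases "T \<in> ?P")
      case True
      then have "psubst (\<lambda>_. T') T \<in> ?P"
        using \<open>wf_pterm F 1 T'\<close> by (auto intro: wf_pterm_psubst simp: peval_psubst)
      then show ?thesis
        using True fun_cong[OF \<open>\<Phi> v = \<Phi> v'\<close>, of "psubst (\<lambda>_. T') T"]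
        by (simp add: \<Phi>_def peval_psubst)
    next
      case False
      then show ?thesis by (simp only: \<Phi>_def restrict_apply if_not_P if_False)
    qed
  qed
  show ?thesis
  proof (rule ccontr)
    assume "\<not> ?thesis"
    then have "\<Phi> x = \<Phi> y" using that unfolding \<Phi>_def by (auto simp: fun_eq_iff)
    then have "\<Phi> a = \<Phi> b"
      using simple_alg_const_if_kernel_closed[where \<Phi> = \<Phi>, OF assms(1) closed] \<open>x \<noteq> y\<close> by blast
    then have "\<Phi> a T0 = \<Phi> b T0" by simp
    then have "peval F (\<lambda>_. a) T0 = peval F (\<lambda>_. b) T0"
      using T0 by (simp add: \<Phi>_def)
    then show False using assms(4) by contradiction
  qed
qed

text \<open>The range of a nonconstant unary polynomial with smallest image is a minimal set, and
  since the top congruence has the single block A, this minimal set is itself a trace.\<close>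

lemma ex_upol_trace:
  fixes F :: "('a::finite) ops"
  assumes "(a::'a) \<noteq> b"
  obtains T where "wf_pterm F 1 T" and "is_trace F (range (\<lambda>z. peval F (\<lambda>_. z) T))"
proof -
  define P where "P T \<longleftrightarrow> wf_pterm F 1 T \<and> (\<exists>x y. peval F (\<lambda>_. x) T \<noteq> peval F (\<lambda>_. y) T)" for T
  have "P (PVar 0)" using assms by (auto simp: P_def)
  then obtain T where T: "P T" and least: "\<And>T'. P T' \<Longrightarrow>
      card (range (\<lambda>z. peval F (\<lambda>_. z) T)) \<le> card (range (\<lambda>z. peval F (\<lambda>_. z) T'))"
    using ex_has_least_nat[of P _ "\<lambda>T. card (range (\<lambda>z. peval F (\<lambda>_. z) T))"] by metis
  let ?U = "range (\<lambda>z. peval F (\<lambda>_. z) T)"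
  have "min_set F ?U"
    unfolding min_set_def
  proof (intro conjI allI impI)
    show "\<exists>f. is_upol F f \<and> (\<exists>a b. f a \<noteq> f b) \<and> ?U = range f"
      using T by (intro exI[of _ "\<lambda>z. peval F (\<lambda>_. z) T"]) (auto simp: P_def is_upol_def)
    fix g assume g: "is_upol F g \<and> (\<exists>a b. g a \<noteq> g b) \<and> range g \<subseteq> ?U"
    then obtain Tg where "wf_pterm F 1 Tg" "\<forall>z. g z = peval F (\<lambda>_. z) Tg"
      unfolding is_upol_def by blast
    moreover from this have "g = (\<lambda>z. peval F (\<lambda>_. z) Tg)" by auto
    ultimately have "card ?U \<le> card (range g)" using g least by (auto simp: P_def)
    then show "range g = ?U" using g by (simp add: card_seteq)
  qed
  moreover have "\<not> ?U \<times> ?U \<subseteq> Id" using T by (auto simp: P_def)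
  moreover have "UNIV \<in> UNIV // (UNIV :: ('a \<times> 'a) set)" by (auto simp: quotient_def)
  ultimately have "is_trace F ?U" unfolding is_trace_def by blast
  with T that show ?thesis unfolding P_def by blast
qed

section \<open>Counting in finite domains\<close>

lemma (in cring) minus_eq_minus_swap:
  assumes "a \<in> carrier R" "b \<in> carrier R" "c \<in> carrier R" "d \<in> carrier R"
    and "a \<ominus> b = c \<ominus> d"
  shows "a \<ominus> c = b \<ominus> d"
proof -
  have "a \<ominus> c = (a \<ominus> b) \<oplus> (b \<ominus> c)" using assms(1-3) by algebra
  also have "\<dots> = (c \<ominus> d) \<oplus> (b \<ominus> c)" using assms(5) by simp
  also have "\<dots> = b \<ominus> d" using assms(2-4) by algebra
  finally show ?thesis .
qed

lemma (in domain) add_pow_card_prime_power_eq_zero: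
  assumes "finite (carrier R)" "card (carrier R) = p ^ m" "x \<in> carrier R"
  shows "[p] \<cdot> x = \<zero>"
proof -
  have "[(p ^ k)] \<cdot> \<one> = \<zero> \<Longrightarrow> [p] \<cdot> \<one> = \<zero>" for k
  proof (induction k)
    case (Suc k)
    have "([p] \<cdot> \<one>) \<otimes> ([(p ^ k)] \<cdot> \<one>) = [(p ^ Suc k)] \<cdot> \<one>"
      by (simp add: add_pow_ldistr add.nat_pow_pow mult.commute)
    then show ?case using Suc by (metis integral add.nat_pow_closed one_closed)
  qed simp
  moreover have "[(p ^ m)] \<cdot> \<one> = \<zero>"
    using add.power_order_eq_one[OF assms(1)] assms(2) by simp
  ultimately have "[p] \<cdot> \<one> = \<zero>" by blast
  then show ?thesis using add_pow_ldistr[of \<one> x p] assms(3) by simp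
qed

lemma (in domain) add_pow_mod_card_prime_power:
  assumes "finite (carrier R)" "card (carrier R) = p ^ m" "x \<in> carrier R"
  shows "[n] \<cdot> x = [(n mod p)] \<cdot> x"
proof -
  have "[n] \<cdot> x = [(n mod p + p * (n div p))] \<cdot> x" by (simp add: mod_mult_div_eq)
  also have "\<dots> = [(n mod p)] \<cdot> x \<oplus> [(n div p)] \<cdot> ([p] \<cdot> x)"
    using add.nat_pow_mult[of x "n mod p" "p * (n div p)"] add.nat_pow_pow[of x "n div p" p] assms(3)
    by simp
  finally show ?thesis using add_pow_card_prime_power_eq_zero[OF assms] assms(3) by simp
qed

lemma (in domain) finsum_by_class_counts:
  fixes cls :: "nat \<Rightarrow> 'c::finite"
  assumes "finite (carrier R)" "card (carrier R) = p ^ m" "finite V" "\<And>c. w c \<in> carrier R"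
  shows "(\<Oplus>i\<in>V. w (cls i)) = (\<Oplus>c\<in>UNIV. [(card {i\<in>V. cls i = c} mod p)] \<cdot> w c)"
proof -
  have "(\<Oplus>c\<in>UNIV. \<Oplus>i\<in>{i\<in>V. cls i = c}. w (cls i)) =
      (\<Oplus>i\<in>(\<Union>c\<in>UNIV. {i\<in>V. cls i = c}). w (cls i))"
    using assms(3,4) by (intro add.finprod_UN_disjoint[symmetric]) (auto simp: pairwise_def disjnt_def)
  also have "(\<Union>c\<in>UNIV. {i\<in>V. cls i = c}) = V" by auto
  finally have "(\<Oplus>i\<in>V. w (cls i)) = (\<Oplus>c\<in>UNIV. \<Oplus>i\<in>{i\<in>V. cls i = c}. w (cls i))" ..
  also have "\<dots> = (\<Oplus>c\<in>UNIV. \<Oplus>i\<in>{i\<in>V. cls i = c}. w c)"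
    using assms(4) by (intro finsum_cong' refl) (auto intro: finsum_closed)
  also have "\<dots> = (\<Oplus>c\<in>UNIV. [(card {i\<in>V. cls i = c} mod p)] \<cdot> w c)"
  proof (rule finsum_cong')
    show "(\<Oplus>i\<in>{i\<in>V. cls i = c}. w c) = [(card {i\<in>V. cls i = c} mod p)] \<cdot> w c" for c
      using assms(4) by (simp add: add.finprod_const) (rule add_pow_mod_card_prime_power[OF assms(1,2,4)])
  qed (use assms(4) in auto)
  finally show ?thesis .
qed

section \<open>Traces of affine type\<close>

locale affine_trace = field R for R :: "('a::finite) ring" (structure) +
  fixes F :: "'a ops" and T0 :: "'a pterm"
  assumes simple: "simple_alg F"
    and T0_wf: "wf_pterm F 1 T0"
    and T0_range: "range (\<lambda>z. peval F (\<lambda>_. z) T0) = carrier R"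
    and affine: "\<And>n f. is_pol F n f \<Longrightarrow>
      (\<And>xs. length xs = n \<Longrightarrow> set xs \<subseteq> carrier R \<Longrightarrow> f xs \<in> carrier R) \<Longrightarrow>
      \<exists>c\<in>carrier R. \<exists>lam. (\<forall>i<n. lam i \<in> carrier R) \<and>
        (\<forall>xs. length xs = n \<and> set xs \<subseteq> carrier R \<longrightarrow>
          f xs = c \<oplus>\<^bsub>R\<^esub> (\<Oplus>\<^bsub>R\<^esub>i\<in>{..<n}. lam i \<otimes>\<^bsub>R\<^esub> xs ! i))"

lemma simple_type2_affine_trace:
  assumes "simple_alg F" and "tct_type2 F"
  obtains R T0 where "affine_trace R F T0" and "is_trace F (carrier R)"
proof -
  have "\<not> card (UNIV :: 'a set) \<le> Suc 0" using assms(1) by (simp add: simple_alg_def)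
  then obtain a b :: 'a where "a \<noteq> b" by (auto simp: card_le_Suc0_iff_eq)
  then obtain T0 where T0: "wf_pterm F 1 T0" "is_trace F (range (\<lambda>z. peval F (\<lambda>_. z) T0))"
    by (rule ex_upol_trace)
  then have "induced_vector_space F (range (\<lambda>z. peval F (\<lambda>_. z) T0))"
    using assms(2) by (simp add: tct_type2_def)
  then obtain R :: "'a ring" where R: "field R" "carrier R = range (\<lambda>z. peval F (\<lambda>_. z) T0)"
    and iff: "\<forall>n (g :: 'a list \<Rightarrow> 'a).
        (\<exists>f. is_pol F n f \<and> (\<forall>xs. length xs = n \<and> set xs \<subseteq> carrier R \<longrightarrow> f xs \<in> carrier R) \<and>
             (\<forall>xs. length xs = n \<and> set xs \<subseteq> carrier R \<longrightarrow> g xs = f xs))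
        \<longleftrightarrow>
        (\<exists>c \<in> carrier R. \<exists>lam. (\<forall>i<n. lam i \<in> carrier R) \<and>
             (\<forall>xs. length xs = n \<and> set xs \<subseteq> carrier R \<longrightarrow>
                g xs = c \<oplus>\<^bsub>R\<^esub> (\<Oplus>\<^bsub>R\<^esub>i\<in>{..<n}. lam i \<otimes>\<^bsub>R\<^esub> xs ! i)))"
    unfolding induced_vector_space_def by auto
  have "affine_trace R F T0"
  proof (rule affine_trace.intro)
    show "affine_trace_axioms R F T0"
    proof
      fix n f
      assume "is_pol F n f" "\<And>xs. length xs = n \<Longrightarrow> set xs \<subseteq> carrier R \<Longrightarrow> f xs \<in> carrier R"
      then have "\<exists>f'. is_pol F n f' \<and> (\<forall>xs. length xs = n \<and> set xs \<subseteq> carrier R \<longrightarrow> f' xs \<in> carrier R) \<and>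
          (\<forall>xs. length xs = n \<and> set xs \<subseteq> carrier R \<longrightarrow> f xs = f' xs)"
        by blast
      then show "\<exists>c\<in>carrier R. \<exists>lam. (\<forall>i<n. lam i \<in> carrier R) \<and>
          (\<forall>xs. length xs = n \<and> set xs \<subseteq> carrier R \<longrightarrow>
            f xs = c \<oplus>\<^bsub>R\<^esub> (\<Oplus>\<^bsub>R\<^esub>i\<in>{..<n}. lam i \<otimes>\<^bsub>R\<^esub> xs ! i))"
        by (rule iffD1[OF iff[rule_format]])
    qed (use assms(1) R T0 in simp_all)
  qed (rule R(1))
  with R T0 that show ?thesis by simp
qed

context affine_trace
begin

definition trace_valued :: "'a pterm \<Rightarrow> bool" where
  "trace_valued H \<longleftrightarrow> (\<exists>n. wf_pterm F n H) \<and> (\<forall>e. peval F e H \<in> carrier R)"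

lemma trace_valued_in_carrier [simp]: "trace_valued H \<Longrightarrow> peval F e H \<in> carrier R"
  by (simp add: trace_valued_def)

lemma trace_valued_subst_at: "trace_valued H \<Longrightarrow> wf_pterm F 1 T \<Longrightarrow> trace_valued (subst_at s T H)"
  unfolding trace_valued_def by (metis wf_pterm_subst_at peval_subst_at)

text \<open>Freezing all variables other than i and j at their values in e leaves a binary polynomial
  mapping the trace into itself.\<close>

lemma trace_valued_binary_affine:
  assumes "trace_valued H" and "i \<noteq> j"
  obtains c l0 l1 where "c \<in> carrier R" "l0 \<in> carrier R" "l1 \<in> carrier R"
    "\<And>x y. x \<in> carrier R \<Longrightarrow> y \<in> carrier R \<Longrightarrow> peval F (e(j := x, i := y)) H = c \<oplus> (l0 \<otimes> x \<oplus> l1 \<otimes> y)"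
proof -
  obtain n where "wf_pterm F n H" using assms(1) by (auto simp: trace_valued_def)
  define \<sigma> where "\<sigma> k = (if k = j then PVar 0 else if k = i then PVar 1 else PConst (e k))" for k
  define f where "f xs = peval F (\<lambda>k. xs ! k) (psubst \<sigma> H)" for xs :: "'a list"
  have f_eq: "f [x, y] = peval F (e(j := x, i := y)) H" for x y
    unfolding f_def peval_psubst using assms(2)
    by (intro arg_cong[where f = "\<lambda>e. peval F e H"]) (auto simp: \<sigma>_def fun_eq_iff)
  have "wf_pterm F 2 (psubst \<sigma> H)"
    using \<open>wf_pterm F n H\<close> by (rule wf_pterm_psubst) (simp add: \<sigma>_def)
  then have "is_pol F 2 f"
    unfolding is_pol_def f_def by blast
  moreover have "f xs \<in> carrier R" for xs
    using assms(1) by (simp add: f_def peval_psubst trace_valued_def)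
  ultimately have "\<exists>c\<in>carrier R. \<exists>lam. (\<forall>i<2. lam i \<in> carrier R) \<and>
      (\<forall>xs. length xs = 2 \<and> set xs \<subseteq> carrier R \<longrightarrow> f xs = c \<oplus> (\<Oplus>i\<in>{..<2}. lam i \<otimes> xs ! i))"
    by (intro affine)
  then obtain c lam where "c \<in> carrier R" "\<forall>i<2. lam i \<in> carrier R"
    and lam: "\<forall>xs. length xs = 2 \<and> set xs \<subseteq> carrier R \<longrightarrow> f xs = c \<oplus> (\<Oplus>i\<in>{..<2}. lam i \<otimes> xs ! i)"
    by blast
  moreover have "f [x, y] = c \<oplus> (lam 0 \<otimes> x \<oplus> lam 1 \<otimes> y)" if "x \<in> carrier R" "y \<in> carrier R" for x y
  proof -
    have "{..<2::nat} = {0, 1}" by auto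
    then show ?thesis using lam[rule_format, of "[x, y]"] that \<open>\<forall>i<2. lam i \<in> carrier R\<close>
      by (simp add: finsum_insert a_comm)
  qed
  ultimately show ?thesis
    using f_eq by (intro that[of c "lam 0" "lam 1"]) auto
qed

definition diff_at :: "'a pterm \<Rightarrow> (nat \<Rightarrow> 'a) \<Rightarrow> nat \<Rightarrow> 'a \<Rightarrow> 'a \<Rightarrow> 'a" where
  "diff_at H e j x x' = peval F (e(j := x)) H \<ominus> peval F (e(j := x')) H"

lemma diff_at_closed [simp]: "trace_valued H \<Longrightarrow> diff_at H e j x x' \<in> carrier R"
  by (simp add: diff_at_def)

lemma diff_at_on_trace:
  assumes "trace_valued H" "i \<noteq> j"
    and "x \<in> carrier R" "x' \<in> carrier R" "y \<in> carrier R" "y' \<in> carrier R"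
  shows "diff_at H (e(j := x)) i y y' = diff_at H (e(j := x')) i y y'"
proof -
  obtain c l0 l1 where "c \<in> carrier R" "l0 \<in> carrier R" "l1 \<in> carrier R"
    and H: "\<And>x y. x \<in> carrier R \<Longrightarrow> y \<in> carrier R \<Longrightarrow>
      peval F (e(j := x, i := y)) H = c \<oplus> (l0 \<otimes> x \<oplus> l1 \<otimes> y)"
    using trace_valued_binary_affine[OF assms(1,2)] by blast
  have "diff_at H (e(j := z)) i y y' = l1 \<otimes> y \<ominus> l1 \<otimes> y'" if "z \<in> carrier R" for z
    unfolding diff_at_def H[OF that assms(5)] H[OF that assms(6)]
    using that assms(5,6) \<open>c \<in> carrier R\<close> \<open>l0 \<in> carrier R\<close> \<open>l1 \<in> carrier R\<close> by algebra
  then show ?thesis using assms(3,4) by simp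
qed

lemma diff_at_swap:
  assumes "trace_valued H" "i \<noteq> j"
  shows "diff_at H (e(j := x)) i y y' = diff_at H (e(j := x')) i y y' \<longleftrightarrow>
    diff_at H (e(i := y)) j x x' = diff_at H (e(i := y')) j x x'"
  using minus_eq_minus_swap[of "peval F (e(j := x, i := y)) H" "peval F (e(j := x, i := y')) H"
      "peval F (e(j := x', i := y)) H" "peval F (e(j := x', i := y')) H"]
    minus_eq_minus_swap[of "peval F (e(j := x, i := y)) H" "peval F (e(j := x', i := y)) H"
      "peval F (e(j := x, i := y')) H" "peval F (e(j := x', i := y')) H"]
    assms by (auto simp: diff_at_def fun_upd_twist)

lemma diff_at_subst_at:
  "i \<noteq> j \<Longrightarrow> diff_at (subst_at j T H) (e(j := x)) i y y' = diff_at H (e(j := peval F (\<lambda>_. x) T)) i y y'"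
  by (simp add: diff_at_def peval_subst_at fun_upd_twist)

text \<open>The kernel of the map sending x to all differences in coordinate i at j := x is closed
  under unary polynomials, because substituting one for variable j keeps H trace-valued.  By
  simplicity it is everything as soon as it identifies two distinct points of the trace.\<close>

lemma diff_at_extend:
  assumes "i \<noteq> j"
    and on_trace: "\<And>H e x x' y y'. trace_valued H \<Longrightarrow> x \<in> carrier R \<Longrightarrow> x' \<in> carrier R \<Longrightarrow> P y y' \<Longrightarrow>
      diff_at H (e(j := x)) i y y' = diff_at H (e(j := x')) i y y'"
    and "trace_valued H" "P y y'"
  shows "diff_at H (e(j := x)) i y y' = diff_at H (e(j := x')) i y y'"
proof -
  define \<Phi> where "\<Phi> x = (\<lambda>(H, e, y, y').
    if trace_valued H \<and> P y y' then diff_at H (e(j := x)) i y y' else \<zero>)" for x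
  have "\<Phi> (peval F (\<lambda>_. x) T) = \<Phi> (peval F (\<lambda>_. x') T)" if "wf_pterm F 1 T" "\<Phi> x = \<Phi> x'" for T x x'
  proof (intro ext, clarify)
    fix H e y y'
    show "\<Phi> (peval F (\<lambda>_. x) T) (H, e, y, y') = \<Phi> (peval F (\<lambda>_. x') T) (H, e, y, y')"
    proof (cases "trace_valued H \<and> P y y'")
      case True
      then have "trace_valued (subst_at j T H)" using trace_valued_subst_at that(1) by blast
      with True have "diff_at (subst_at j T H) (e(j := x)) i y y' = diff_at (subst_at j T H) (e(j := x')) i y y'"
        using fun_cong[OF that(2), of "(subst_at j T H, e, y, y')"] by (simp add: \<Phi>_def)
      with True show ?thesis by (simp add: \<Phi>_def diff_at_subst_at \<open>i \<noteq> j\<close>)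
    next
      case False
      then show ?thesis by (auto simp: \<Phi>_def)
    qed
  qed
  moreover have "\<Phi> \<zero> = \<Phi> \<one>" using on_trace by (auto simp: \<Phi>_def fun_eq_iff)
  ultimately have "\<Phi> x = \<Phi> x'"
    using simple_alg_const_if_kernel_closed[where \<Phi> = \<Phi>, OF simple] one_not_zero by metis
  then have "\<Phi> x (H, e, y, y') = \<Phi> x' (H, e, y, y')" by simp
  then show ?thesis using assms(3,4) by (simp add: \<Phi>_def)
qed

lemma trace_valued_square:
  assumes "trace_valued H" "i \<noteq> j"
  shows "diff_at H (e(j := x)) i y y' = diff_at H (e(j := x')) i y y'"
proof -
  have y_on_trace: "diff_at H (e(j := x)) i y y' = diff_at H (e(j := x')) i y y'"
    if "trace_valued H" "i \<noteq> j" "y \<in> carrier R" "y' \<in> carrier R" for H e i j x x' y y'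
  proof (rule diff_at_extend[where P = "\<lambda>y y'. y \<in> carrier R \<and> y' \<in> carrier R"])
    fix H e x x' y y'
    assume "trace_valued H" "x \<in> carrier R" "x' \<in> carrier R" "y \<in> carrier R \<and> y' \<in> carrier R"
    then show "diff_at H (e(j := x)) i y y' = diff_at H (e(j := x')) i y y'"
      using \<open>i \<noteq> j\<close> by (intro diff_at_on_trace) auto
  qed (use that in auto)
  have x_on_trace: "diff_at H (e(j := x)) i y y' = diff_at H (e(j := x')) i y y'"
    if "trace_valued H" "i \<noteq> j" "x \<in> carrier R" "x' \<in> carrier R" for H e i j x x' y y'
    using y_on_trace[where i = j and j = i and x = y and x' = y' and y = x and y' = x'] that
    by (simp add: diff_at_swap)
  show ?thesis
  proof (rule diff_at_extend[where P = "\<lambda>_ _. True"])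
    fix H e x x' y y'
    assume "trace_valued H" "x \<in> carrier R" "x' \<in> carrier R"
    then show "diff_at H (e(j := x)) i y y' = diff_at H (e(j := x')) i y y'"
      using \<open>i \<noteq> j\<close> by (intro x_on_trace)
  qed (use assms in auto)
qed

lemma diff_at_eq_if_agree:
  assumes "trace_valued H" "finite W" "j \<notin> W" "\<And>k. k \<notin> W \<Longrightarrow> e k = e' k"
  shows "diff_at H e j x x' = diff_at H e' j x x'"
  using assms(2-4)
proof (induction W arbitrary: e' rule: finite_induct)
  case empty
  then have "e = e'" by auto
  then show ?case by simp
next
  case (insert i W)
  have "diff_at H e j x x' = diff_at H (e'(i := e i)) j x x'"
    using insert.prems by (intro insert.IH) auto
  also have "\<dots> = diff_at H (e'(i := e' i)) j x x'"
    using trace_valued_square[OF assms(1)] insert.prems(1) by blast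
  finally show ?case by simp
qed

lemma peval_eq_diff_sum:
  assumes "trace_valued H" "finite V" "\<And>k. k \<notin> V \<Longrightarrow> e k = e0 k"
  shows "peval F e H = peval F e0 H \<oplus> (\<Oplus>i\<in>V. diff_at H e0 i (e i) (e0 i))"
  using assms(2,3)
proof (induction V arbitrary: e rule: finite_induct)
  case empty
  then have "e = e0" by auto
  then show ?case using assms(1) by simp
next
  case (insert j V)
  define e' where "e' = e(j := e0 j)"
  have "peval F e H = peval F e' H \<oplus> (peval F e H \<ominus> peval F e' H)"
    using trace_valued_in_carrier[OF assms(1), of e] trace_valued_in_carrier[OF assms(1), of e']
    by algebra
  also have "peval F e H \<ominus> peval F e' H = diff_at H e0 j (e j) (e0 j)"
  proof -
    have "peval F e H \<ominus> peval F e' H = diff_at H e' j (e j) (e0 j)"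
      by (simp add: diff_at_def e'_def)
    also have "\<dots> = diff_at H e0 j (e j) (e0 j)"
      by (rule diff_at_eq_if_agree[OF assms(1) insert.hyps(1,2)])
        (use insert.prems in \<open>auto simp: e'_def\<close>)
    finally show ?thesis .
  qed
  also have "peval F e' H = peval F e0 H \<oplus> (\<Oplus>i\<in>V. diff_at H e0 i (e' i) (e0 i))"
    by (rule insert.IH) (use insert.prems in \<open>auto simp: e'_def\<close>)
  also have "(\<Oplus>i\<in>V. diff_at H e0 i (e' i) (e0 i)) = (\<Oplus>i\<in>V. diff_at H e0 i (e i) (e0 i))"
    using insert.hyps(2) assms(1) by (intro finsum_cong') (auto simp: e'_def)
  finally show ?case using insert.hyps assms(1) by (simp add: finsum_insert a_ac)
qed

lemma ex_separating_upol:
  assumes "x \<noteq> y"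
  obtains T where "wf_pterm F 1 T" "\<And>z. peval F (\<lambda>_. z) T \<in> carrier R"
    "peval F (\<lambda>_. x) T \<noteq> peval F (\<lambda>_. y) T"
proof -
  have T0_carrier: "peval F (\<lambda>_. z) T0 \<in> carrier R" for z
    unfolding T0_range[symmetric] by simp
  have "\<zero> \<in> range (\<lambda>z. peval F (\<lambda>_. z) T0)" "\<one> \<in> range (\<lambda>z. peval F (\<lambda>_. z) T0)"
    unfolding T0_range by simp_all
  then obtain a b where "\<zero> = peval F (\<lambda>_. a) T0" "\<one> = peval F (\<lambda>_. b) T0" by blast
  then have "peval F (\<lambda>_. a) T0 \<noteq> peval F (\<lambda>_. b) T0" by (metis one_not_zero)
  from simple_alg_separating_upol[OF simple T0_wf T0_carrier this assms] that show ?thesis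
    by metis
qed

text \<open>T composed with t is trace-valued, hence the sum of its one-variable differences at the
  constant input lo, and the difference at input i only depends on the value of t at the i-th
  unit vector.\<close>

lemma peval_upol_by_class_counts:
  fixes lo hi :: 'a and b :: "nat \<Rightarrow> bool"
  assumes "card (carrier R) = p ^ m" "wf_pterm F n t" "finite V"
    and T: "wf_pterm F 1 T" "\<And>z. peval F (\<lambda>_. z) T \<in> carrier R"
  defines "h0 \<equiv> peval F (\<lambda>_. peval F (\<lambda>_. lo) t) T"
  shows "peval F (\<lambda>_. peval F (\<lambda>i. if i \<in> V \<and> b i then hi else lo) t) T = h0 \<oplus>
    (\<Oplus>c\<in>UNIV. [(card {i\<in>V. b i \<and> peval F ((\<lambda>_. lo)(i := hi)) t = c} mod p)] \<cdot>
      (peval F (\<lambda>_. c) T \<ominus> h0))"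
proof -
  define H where "H = psubst (\<lambda>_. t) T"
  have peval_H: "peval F e H = peval F (\<lambda>_. peval F e t) T" for e
    by (simp add: H_def peval_psubst)
  have "trace_valued H"
    unfolding trace_valued_def peval_H using T assms(2) wf_pterm_psubst[OF T(1), of n "\<lambda>_. t"]
    by (auto simp: H_def)
  define cls where "cls i = peval F ((\<lambda>_. lo)(i := hi)) t" for i
  let ?Vb = "{i\<in>V. b i}"
  have "finite ?Vb" using assms(3) by simp
  moreover have "\<And>k. k \<notin> ?Vb \<Longrightarrow> (if k \<in> V \<and> b k then hi else lo) = lo" by auto
  ultimately have "peval F (\<lambda>i. if i \<in> V \<and> b i then hi else lo) H
      = peval F (\<lambda>_. lo) H \<oplus> (\<Oplus>i\<in>?Vb. diff_at H (\<lambda>_. lo) i (if i \<in> V \<and> b i then hi else lo) lo)"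
    by (rule peval_eq_diff_sum[OF \<open>trace_valued H\<close>])
  then have "peval F (\<lambda>_. peval F (\<lambda>i. if i \<in> V \<and> b i then hi else lo) t) T
      = h0 \<oplus> (\<Oplus>i\<in>?Vb. diff_at H (\<lambda>_. lo) i (if i \<in> V \<and> b i then hi else lo) lo)"
    by (simp only: peval_H h0_def)
  also have "(\<Oplus>i\<in>?Vb. diff_at H (\<lambda>_. lo) i (if i \<in> V \<and> b i then hi else lo) lo)
      = (\<Oplus>i\<in>?Vb. peval F (\<lambda>_. cls i) T \<ominus> h0)"
    using T(2) by (intro finsum_cong') (auto simp: diff_at_def peval_H h0_def cls_def fun_upd_idem)
  also have "\<dots> = (\<Oplus>c\<in>UNIV. [(card {i\<in>?Vb. cls i = c} mod p)] \<cdot> (peval F (\<lambda>_. c) T \<ominus> h0))"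
    using T(2) assms(1,3) by (intro finsum_by_class_counts) (auto simp: h0_def)
  finally show ?thesis by (simp add: cls_def conj_assoc)
qed

lemma peval_eq_if_class_counts_cong:
  assumes "card (carrier R) = p ^ m" "wf_pterm F n t" "finite V"
    and "\<And>c. card {i\<in>V. b i \<and> peval F ((\<lambda>_. lo)(i := hi)) t = c} mod p =
      card {i\<in>V. b' i \<and> peval F ((\<lambda>_. lo)(i := hi)) t = c} mod p"
  shows "peval F (\<lambda>i. if i \<in> V \<and> b i then hi else lo) t =
    peval F (\<lambda>i. if i \<in> V \<and> b' i then hi else lo) t"
proof (rule ccontr)
  assume "\<not> ?thesis"
  then obtain T where T: "wf_pterm F 1 T" "\<And>z. peval F (\<lambda>_. z) T \<in> carrier R"
    and "peval F (\<lambda>_. peval F (\<lambda>i. if i \<in> V \<and> b i then hi else lo) t) T \<noteq>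
      peval F (\<lambda>_. peval F (\<lambda>i. if i \<in> V \<and> b' i then hi else lo) t) T"
    using ex_separating_upol by blast
  moreover note peval_upol_by_class_counts[OF assms(1-3) T, where lo = lo and hi = hi and b = b]
    peval_upol_by_class_counts[OF assms(1-3) T, where lo = lo and hi = hi and b = b']
  ultimately show False unfolding assms(4) by argo
qed

lemma program_val_eq_if_class_counts_cong:
  assumes "card (carrier R) = p ^ m" "wf_circuit F n gs"
    and "\<And>c. card {i \<in> circuit_inputs gs. b i \<and> circuit_val F gs ((\<lambda>_. \<iota> False)(i := \<iota> True)) = c} mod p =
      card {i \<in> circuit_inputs gs. b' i \<and> circuit_val F gs ((\<lambda>_. \<iota> False)(i := \<iota> True)) = c} mod p"
  shows "program_val F gs \<iota> S b = program_val F gs \<iota> S b'"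
proof -
  obtain t where "wf_pterm F n t" and t: "circuit_val F gs = (\<lambda>x. peval F x t)"
    by (rule circuit_val_eq_peval[OF assms(2)])
  have "program_val F gs \<iota> S b \<longleftrightarrow>
      peval F (\<lambda>i. if i \<in> circuit_inputs gs \<and> b i then \<iota> True else \<iota> False) t \<in> S" for b
  proof -
    have "circuit_val F gs (\<lambda>i. \<iota> (b i)) =
        circuit_val F gs (\<lambda>i. if i \<in> circuit_inputs gs \<and> b i then \<iota> True else \<iota> False)"
      by (rule circuit_val_cong) simp
    then show ?thesis by (simp add: program_val_def t)
  qed
  moreover have "peval F (\<lambda>i. if i \<in> circuit_inputs gs \<and> b i then \<iota> True else \<iota> False) t =
      peval F (\<lambda>i. if i \<in> circuit_inputs gs \<and> b' i then \<iota> True else \<iota> False) t"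
    using assms(3) unfolding t
    by (rule peval_eq_if_class_counts_cong[where b = b and b' = b' and lo = "\<iota> False" and hi = "\<iota> True",
          OF assms(1) \<open>wf_pterm F n t\<close> finite_circuit_inputs])
  ultimately show ?thesis by simp
qed

end

section \<open>BOUND-MOD circuits\<close>

lemma bound_mod_circuit_if_class_counts_determine:
  fixes cls :: "nat \<Rightarrow> 'c::finite" and f :: "(nat \<Rightarrow> bool) \<Rightarrow> bool"
  assumes "0 < p" "V \<subseteq> {..<n}" "finite V"
    and determined: "\<And>b b'. (\<And>c. card {i\<in>V. b i \<and> cls i = c} mod p = card {i\<in>V. b' i \<and> cls i = c} mod p) \<Longrightarrow>
      f b = f b'"
  shows "\<exists>M g. bm_wf (card (UNIV :: 'c set) * p) p n M \<and>
    bm_size M \<le> card (UNIV :: 'c set) * p * (card V + 2) + 1 \<and> (\<forall>b. f b = bm_val p M g b)"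
proof -
  obtain cs :: "'c list" where cs: "set cs = UNIV" "distinct cs"
    using finite_distinct_list[OF finite_UNIV] by blast
  define M where "M = concat (map (\<lambda>c. map (\<lambda>r. ({i\<in>V. cls i = c}, {r})) [0..<p]) cs)"
  define g where "g ys \<longleftrightarrow> (\<exists>b. map (\<lambda>G. mod_gate_val p G b) M = ys \<and> f b)" for ys
  have len: "length M = card (UNIV :: 'c set) * p"
    using distinct_card[OF cs(2)] cs(1) by (simp add: M_def length_concat comp_def sum_list_triv)
  have setM: "set M = {({i\<in>V. cls i = c}, {r}) | c r. r < p}"
    using cs(1) by (force simp: M_def)
  have "bm_wf (card (UNIV :: 'c set) * p) p n M" using len setM assms(2) by (auto simp: bm_wf_def)
  moreover have "bm_size M \<le> card (UNIV :: 'c set) * p * (card V + 2) + 1"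
  proof -
    have "sum_list (map (\<lambda>G. card (fst G)) M) \<le> sum_list (map (\<lambda>G. card V) M)"
      by (rule sum_list_mono) (use setM assms(3) in \<open>auto intro: card_mono\<close>)
    then show ?thesis using len by (simp add: bm_size_def sum_list_triv algebra_simps)
  qed
  moreover have "f b = bm_val p M g b" for b
  proof -
    have "f b' = f b" if "map (\<lambda>G. mod_gate_val p G b) M = map (\<lambda>G. mod_gate_val p G b') M" for b'
    proof (rule determined)
      fix c
      let ?G = "({i\<in>V. cls i = c}, {card {i\<in>V. b' i \<and> cls i = c} mod p})"
      have "?G \<in> set M" using setM assms(1) by auto
      then have "mod_gate_val p ?G b = mod_gate_val p ?G b'"
        using that by (simp add: map_eq_conv)
      moreover have "{i \<in> {i\<in>V. cls i = c}. b'' i} = {i\<in>V. b'' i \<and> cls i = c}" for b'' :: "nat \<Rightarrow> bool"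
        by auto
      ultimately show "card {i\<in>V. b' i \<and> cls i = c} mod p = card {i\<in>V. b i \<and> cls i = c} mod p"
        by (simp add: mod_gate_val_def)
    qed
    then show ?thesis unfolding bm_val_def g_def by (metis (mono_tags))
  qed
  ultimately show ?thesis by blast
qed

theorem mainTheorem6:
  fixes F :: "('a::finite) ops" and p :: nat
  assumes "simple_alg F"
    and "tct_type2 F"
    and "prime p"
    and "\<forall>N. is_trace F N \<longrightarrow> (\<exists>m. card N = p ^ m)"
  shows "\<exists>k C :: nat. \<forall>n gs (\<iota> :: bool \<Rightarrow> 'a) S.
           wf_circuit F n gs \<longrightarrow>
           (\<exists>M g. bm_wf k p n M \<and> bm_size M \<le> C * circuit_size gs \<and>
                  (\<forall>b. program_val F gs \<iota> S b = bm_val p M g b))"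
proof -
  obtain R T0 where affine: "affine_trace R F T0" and trace: "is_trace F (carrier R)"
    using simple_type2_affine_trace[OF assms(1,2)] by blast
  interpret affine_trace R F T0 by (fact affine)
  obtain m where card: "card (carrier R) = p ^ m" using assms(4) trace by blast
  let ?k = "card (UNIV :: 'a set) * p"
  show ?thesis
  proof (rule exI[of _ ?k], rule exI[of _ "3 * ?k + 1"], intro allI impI)
    fix n gs and \<iota> :: "bool \<Rightarrow> 'a" and S
    assume wf: "wf_circuit F n gs"
    have "\<exists>M g. bm_wf ?k p n M \<and> bm_size M \<le> ?k * (card (circuit_inputs gs) + 2) + 1 \<and>
        (\<forall>b. program_val F gs \<iota> S b = bm_val p M g b)"
      by (rule bound_mod_circuit_if_class_counts_determine
          [where cls = "\<lambda>i. circuit_val F gs ((\<lambda>_. \<iota> False)(i := \<iota> True))",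
           OF prime_gt_0_nat[OF assms(3)] circuit_inputs_subset[OF wf] finite_circuit_inputs])
        (rule program_val_eq_if_class_counts_cong[OF card wf])
    with circuit_size_bound[OF wf, of ?k] show "\<exists>M g. bm_wf ?k p n M \<and>
        bm_size M \<le> (3 * ?k + 1) * circuit_size gs \<and> (\<forall>b. program_val F gs \<iota> S b = bm_val p M g b)"
      using order_trans by blast
  qed
qed

end
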